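(* Suppose each $X_k$ is a partially ordered set, and $f\colon\prod_{i\in[n]}X_i\to Y$ satisfies condition (BC) and is order-preserving with respect to the componentwise order. Then each $\Phi_k^-$ and $\Phi_k^+$ ($k\in[n]$) is order-preserving. Consequently, if moreover $f$ is a pseudo-polynomial function, then there exist a polynomial function $p\colon Y^n\to Y$ and order-preserving maps $\varphi_k\colon X_k\to Y$ satisfying the boundary condition such that $f(\mathbf{x})=p(\varphi_1(x_1),\ldots,\varphi_n(x_n))$ for all $\mathbf{x}$.
   Context: $Y$ is a finite distributive lattice identified with a sublattice of $\mathcal{P}(U)$ for a finite set $U$, with least element $0=\emptyset$, greatest element $1=U$, and $\wedge,\vee$ being intersection and union; $\overline{S}=U\setminus S$. For $S\subseteq U$, $\operatorname{cl}(S)=\bigwedge\{y\in Y: y\ge S\}$, $\operatorname{int}(S)=\bigvee\{y\in Y: y\le S\}$. $[n]=\{1,\ldots,n\}$; $X_1,\ldots,X_n$ are sets with at least two elements, each with two fixed distinct elements $0_{X_k},1_{X_k}$ (written $0,1$). For $\mathbf{x}\in\prod_i X_i$ and $a\in X_k$, $\mathbf{x}_k^a$ is $\mathbf{x}$ with $k$-th component replaced by $a$. A map $\varphi_k\colon X_k\to Y$ satisfies the boundary condition if $\varphi_k(0_{X_k})\le\varphi_k(x_k)\le\varphi_k(1_{X_k})$ for all $x_k$. A polynomial function $Y^n\to Y$ is a composition of $\wedge,\vee$ with variables and constants. $f$ is a pseudo-polynomial function if $f(\mathbf{x})=p(\varphi_1(x_1),\ldots,\varphi_n(x_n))$ for some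 polynomial function $p$ and maps $\varphi_k$ satisfying the boundary condition. Condition (BC): $f(\mathbf{x}_k^0)\le f(\mathbf{x})\le f(\mathbf{x}_k^1)$ for all $k$ and $\mathbf{x}$. For $k\in[n]$, $a_k\in X_k$: $$\Phi_k^-(a_k)=\bigvee_{\mathbf{x}:\,x_k=a_k}\operatorname{cl}\big(f(\mathbf{x})\wedge\overline{f(\mathbf{x}_k^0)}\big),\qquad \Phi_k^+(a_k)=\bigwedge_{\mathbf{x}:\,x_k=a_k}\operatorname{int}\big(f(\mathbf{x})\vee\overline{f(\mathbf{x}_k^1)}\big),$$ ranging over all $\mathbf{x}$ with $k$-th component $a_k$. *)

theory Defs
  imports Main "HOL-Library.FuncSet"
begin

text \<open>Y: a finite distributive lattice, represented as a sublattice of Pow U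
  containing the empty set (least element) and U (greatest element).\<close>
definition set_lattice :: "'u set \<Rightarrow> 'u set set \<Rightarrow> bool" where
  "set_lattice U Y \<longleftrightarrow> finite U \<and> Y \<subseteq> Pow U \<and> {} \<in> Y \<and> U \<in> Y \<and>
     (\<forall>a\<in>Y. \<forall>b\<in>Y. a \<inter> b \<in> Y \<and> a \<union> b \<in> Y)"

definition lcl :: "'u set set \<Rightarrow> 'u set \<Rightarrow> 'u set" where
  "lcl Y S = \<Inter> {y \<in> Y. S \<subseteq> y}"

definition lint :: "'u set set \<Rightarrow> 'u set \<Rightarrow> 'u set" where
  "lint Y S = \<Union> {y \<in> Y. y \<subseteq> S}"

definition poset_on :: "'a set \<Rightarrow> ('a \<Rightarrow> 'a \<Rightarrow> bool) \<Rightarrow> bool" where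
  "poset_on A le \<longleftrightarrow> (\<forall>a\<in>A. le a a) \<and>
     (\<forall>a\<in>A. \<forall>b\<in>A. le a b \<and> le b a \<longrightarrow> a = b) \<and>
     (\<forall>a\<in>A. \<forall>b\<in>A. \<forall>c\<in>A. le a b \<and> le b c \<longrightarrow> le a c)"

abbreviation prodX :: "nat \<Rightarrow> (nat \<Rightarrow> 'x set) \<Rightarrow> (nat \<Rightarrow> 'x) set" where
  "prodX n X \<equiv> Pi\<^sub>E {1..n} X"

datatype 'c lterm = LVar nat | LConst 'c | LMeet "'c lterm" "'c lterm" | LJoin "'c lterm" "'c lterm"

primrec leval :: "'u set lterm \<Rightarrow> (nat \<Rightarrow> 'u set) \<Rightarrow> 'u set" where
  "leval (LVar i) y = y i"
| "leval (LConst c) y = c"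
| "leval (LMeet s t) y = leval s y \<inter> leval t y"
| "leval (LJoin s t) y = leval s y \<union> leval t y"

primrec lvars :: "'c lterm \<Rightarrow> nat set" where
  "lvars (LVar i) = {i}"
| "lvars (LConst c) = {}"
| "lvars (LMeet s t) = lvars s \<union> lvars t"
| "lvars (LJoin s t) = lvars s \<union> lvars t"

primrec lconsts :: "'c lterm \<Rightarrow> 'c set" where
  "lconsts (LVar i) = {}"
| "lconsts (LConst c) = {c}"
| "lconsts (LMeet s t) = lconsts s \<union> lconsts t"
| "lconsts (LJoin s t) = lconsts s \<union> lconsts t"

definition polynomial_fun :: "'u set set \<Rightarrow> nat \<Rightarrow> ((nat \<Rightarrow> 'u set) \<Rightarrow> 'u set) \<Rightarrow> bool" where
  "polynomial_fun Y n p \<longleftrightarrow> (\<exists>t. lvars t \<subseteq> {1..n} \<and> lconsts t \<subseteq> Y \<and>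
     (\<forall>y\<in>Pi\<^sub>E {1..n} (\<lambda>_. Y). p y = leval t y))"

definition boundary_cond :: "'x set \<Rightarrow> 'x \<Rightarrow> 'x \<Rightarrow> ('x \<Rightarrow> 'u set) \<Rightarrow> bool" where
  "boundary_cond A z w \<phi> \<longleftrightarrow> (\<forall>a\<in>A. \<phi> z \<subseteq> \<phi> a \<and> \<phi> a \<subseteq> \<phi> w)"

definition pseudo_polynomial ::
  "'u set set \<Rightarrow> nat \<Rightarrow> (nat \<Rightarrow> 'x set) \<Rightarrow> (nat \<Rightarrow> 'x) \<Rightarrow> (nat \<Rightarrow> 'x)
    \<Rightarrow> ((nat \<Rightarrow> 'x) \<Rightarrow> 'u set) \<Rightarrow> bool" where
  "pseudo_polynomial Y n X zero one f \<longleftrightarrow>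
     (\<exists>p \<phi>. polynomial_fun Y n p \<and>
        (\<forall>k\<in>{1..n}. \<phi> k \<in> X k \<rightarrow> Y \<and> boundary_cond (X k) (zero k) (one k) (\<phi> k)) \<and>
        (\<forall>x\<in>prodX n X. f x = p (\<lambda>i\<in>{1..n}. \<phi> i (x i))))"

definition cond_BC ::
  "nat \<Rightarrow> (nat \<Rightarrow> 'x set) \<Rightarrow> (nat \<Rightarrow> 'x) \<Rightarrow> (nat \<Rightarrow> 'x) \<Rightarrow> ((nat \<Rightarrow> 'x) \<Rightarrow> 'u set) \<Rightarrow> bool" where
  "cond_BC n X zero one f \<longleftrightarrow> (\<forall>k\<in>{1..n}. \<forall>x\<in>prodX n X.
      f (x(k := zero k)) \<subseteq> f x \<and> f x \<subseteq> f (x(k := one k)))"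

definition PhiMinus ::
  "'u set \<Rightarrow> 'u set set \<Rightarrow> nat \<Rightarrow> (nat \<Rightarrow> 'x set) \<Rightarrow> (nat \<Rightarrow> 'x) \<Rightarrow> ((nat \<Rightarrow> 'x) \<Rightarrow> 'u set)
    \<Rightarrow> nat \<Rightarrow> 'x \<Rightarrow> 'u set" where
  "PhiMinus U Y n X zero f k a =
     \<Union> {lcl Y (f x \<inter> (U - f (x(k := zero k)))) | x. x \<in> prodX n X \<and> x k = a}"

definition PhiPlus ::
  "'u set \<Rightarrow> 'u set set \<Rightarrow> nat \<Rightarrow> (nat \<Rightarrow> 'x set) \<Rightarrow> (nat \<Rightarrow> 'x) \<Rightarrow> ((nat \<Rightarrow> 'x) \<Rightarrow> 'u set)
    \<Rightarrow> nat \<Rightarrow> 'x \<Rightarrow> 'u set" where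
  "PhiPlus U Y n X one f k a =
     \<Inter> {lint Y (f x \<union> (U - f (x(k := one k)))) | x. x \<in> prodX n X \<and> x k = a}"

end

theory Submission
  imports Defs
begin

(*
  Part 1 (monotonicity of Phi^- and Phi^+) needs only that f is order-preserving in
  each coordinate: raising x_k from a to b moves every vector in the family indexed
  by a to a vector in the family indexed by b and can only enlarge the terms, so the
  join defining Phi^- grows, and dually the meet defining Phi^+ grows.

  Part 2 rests on the median decomposition of lattice polynomials: if c <= u <= d, then
  p(y[k:=u]) = p(y[k:=c]) \/ (u /\ p(y[k:=d])).  Given a representation
  f(x) = p(phi_1(x_1),...,phi_n(x_n)) we replace each phi_k by its order-preserving
  envelope psi_k(a) = join of phi_k(b) over all b <= a or b <= 0.  By the median
  decomposition the value of p does not change when a single coordinate phi_k(a) is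
  replaced by psi_k(a), because each extra term phi_k(b) only contributes points of
  f(x[k:=b]), which lie in f(x) by monotonicity and (BC).  Replacing the coordinates
  one after another yields the representation by p and the psi_k.
*)

section \<open>Lattice polynomial terms\<close>

lemma leval_mono: "(\<And>i. y i \<subseteq> y' i) \<Longrightarrow> leval t y \<subseteq> leval t y'"
  by (induction t) auto

lemma leval_cong: "(\<And>i. i \<in> lvars t \<Longrightarrow> y i = y' i) \<Longrightarrow> leval t y = leval t y'"
  by (induction t) auto

lemma leval_median:
  assumes "c \<subseteq> u" "u \<subseteq> d"
  shows "leval t (y(k := u)) = leval t (y(k := c)) \<union> (u \<inter> leval t (y(k := d)))"
  using assms
proof (induction t)
  case (LMeet s r)
  have "leval s (y(k := c)) \<subseteq> leval s (y(k := d))" "leval r (y(k := c)) \<subseteq> leval r (y(k := d))"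
    by (rule leval_mono; use LMeet.prems in auto)+
  moreover have "leval s (y(k := u)) = leval s (y(k := c)) \<union> (u \<inter> leval s (y(k := d)))"
    "leval r (y(k := u)) = leval r (y(k := c)) \<union> (u \<inter> leval r (y(k := d)))"
    using LMeet by blast+
  ultimately show ?case unfolding leval.simps by blast
next
  case (LVar i)
  then show ?case by (cases "i = k") auto
qed auto

lemma set_lattice_Union_closed:
  assumes Y: "set_lattice U Y" and F: "F \<subseteq> Y" "F \<noteq> {}"
  shows "\<Union>F \<in> Y"
proof -
  have "finite Y" using Y unfolding set_lattice_def by (meson finite_Pow_iff finite_subset)
  then have "finite F" using F(1) finite_subset by blast
  from this F(2) F(1) show ?thesis
  proof (induction F rule: finite_ne_induct)
    case (insert x F)
    then show ?case using Y unfolding set_lattice_def by auto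
  qed auto
qed

lemma lcl_mono: "S \<subseteq> S' \<Longrightarrow> lcl Y S \<subseteq> lcl Y S'"
  unfolding lcl_def by blast

lemma lint_mono: "S \<subseteq> S' \<Longrightarrow> lint Y S \<subseteq> lint Y S'"
  unfolding lint_def by blast

section \<open>Monotonicity of the maps Phi\<close>

lemma prodX_upd: "x \<in> prodX n X \<Longrightarrow> k \<in> {1..n} \<Longrightarrow> b \<in> X k \<Longrightarrow> x(k := b) \<in> prodX n X"
  by (metis PiE_fun_upd insert_absorb)

lemma coordinate_mono:
  assumes poset: "\<forall>k\<in>{1..n}. poset_on (X k) (le k)"
    and mono: "\<forall>x\<in>prodX n X. \<forall>y\<in>prodX n X. (\<forall>i\<in>{1..n}. le i (x i) (y i)) \<longrightarrow> f x \<subseteq> f y"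
    and x: "x \<in> prodX n X" and k: "k \<in> {1..n}" and ab: "a \<in> X k" "b \<in> X k" "le k a b"
  shows "f (x(k := a)) \<subseteq> f (x(k := b))"
proof -
  have "le i ((x(k := a)) i) ((x(k := b)) i)" if i: "i \<in> {1..n}" for i
  proof (cases "i = k")
    case False
    have "x i \<in> X i" using x i by blast
    then show ?thesis using poset i False unfolding poset_on_def by simp
  qed (use ab in simp)
  then show ?thesis using mono prodX_upd[OF x k ab(1)] prodX_upd[OF x k ab(2)] by blast
qed

lemma PhiMinus_mono:
  assumes mono_k: "\<And>x. x \<in> prodX n X \<Longrightarrow> f (x(k := a)) \<subseteq> f (x(k := b))"
    and k: "k \<in> {1..n}" and b: "b \<in> X k"
  shows "PhiMinus U Y n X zero f k a \<subseteq> PhiMinus U Y n X zero f k b"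
  unfolding PhiMinus_def
proof (rule Union_least)
  fix S assume "S \<in> {lcl Y (f x \<inter> (U - f (x(k := zero k)))) | x. x \<in> prodX n X \<and> x k = a}"
  then obtain x where x: "x \<in> prodX n X" "x k = a"
    and S: "S = lcl Y (f x \<inter> (U - f (x(k := zero k))))" by blast
  have "f x \<subseteq> f (x(k := b))" using mono_k[OF x(1)] x(2) by (simp add: fun_upd_idem)
  then have "S \<subseteq> lcl Y (f (x(k := b)) \<inter> (U - f ((x(k := b))(k := zero k))))"
    unfolding S by (intro lcl_mono) auto
  moreover have "lcl Y (f (x(k := b)) \<inter> (U - f ((x(k := b))(k := zero k)))) \<in>
      {lcl Y (f x \<inter> (U - f (x(k := zero k)))) | x. x \<in> prodX n X \<and> x k = b}"
    using prodX_upd[OF x(1) k b] by (intro CollectI exI[where x = "x(k := b)"]) simp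
  ultimately show "S \<subseteq> \<Union> {lcl Y (f x \<inter> (U - f (x(k := zero k)))) | x. x \<in> prodX n X \<and> x k = b}"
    by (meson Union_upper subset_trans)
qed

lemma PhiPlus_mono:
  assumes mono_k: "\<And>x. x \<in> prodX n X \<Longrightarrow> f (x(k := a)) \<subseteq> f (x(k := b))"
    and k: "k \<in> {1..n}" and a: "a \<in> X k"
  shows "PhiPlus U Y n X one f k a \<subseteq> PhiPlus U Y n X one f k b"
  unfolding PhiPlus_def
proof (rule Inter_greatest)
  fix S assume "S \<in> {lint Y (f x \<union> (U - f (x(k := one k)))) | x. x \<in> prodX n X \<and> x k = b}"
  then obtain y where y: "y \<in> prodX n X" "y k = b"
    and S: "S = lint Y (f y \<union> (U - f (y(k := one k))))" by blast
  have "f (y(k := a)) \<subseteq> f y" using mono_k[OF y(1)] y(2) by (simp add: fun_upd_idem)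
  then have "lint Y (f (y(k := a)) \<union> (U - f ((y(k := a))(k := one k)))) \<subseteq> S"
    unfolding S by (intro lint_mono) auto
  moreover have "lint Y (f (y(k := a)) \<union> (U - f ((y(k := a))(k := one k)))) \<in>
      {lint Y (f x \<union> (U - f (x(k := one k)))) | x. x \<in> prodX n X \<and> x k = a}"
    using prodX_upd[OF y(1) k a] by (intro CollectI exI[where x = "y(k := a)"]) simp
  ultimately show "\<Inter> {lint Y (f x \<union> (U - f (x(k := one k)))) | x. x \<in> prodX n X \<and> x k = a} \<subseteq> S"
    by (meson Inter_lower subset_trans)
qed

section \<open>The order-preserving envelope of a map\<close>

definition envelope :: "'x set \<Rightarrow> ('x \<Rightarrow> 'x \<Rightarrow> bool) \<Rightarrow> 'x \<Rightarrow> ('x \<Rightarrow> 'u set) \<Rightarrow> 'x \<Rightarrow> 'u set"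
  where "envelope A le z \<phi> a = \<Union> {\<phi> b | b. b \<in> A \<and> (le b a \<or> le b z)}"

lemma envelope_upper: "a \<in> A \<Longrightarrow> le a a \<Longrightarrow> \<phi> a \<subseteq> envelope A le z \<phi> a"
  unfolding envelope_def by blast

lemma envelope_bounded: "(\<And>b. b \<in> A \<Longrightarrow> \<phi> b \<subseteq> d) \<Longrightarrow> envelope A le z \<phi> a \<subseteq> d"
  unfolding envelope_def by blast

lemma envelope_bottom: "envelope A le z \<phi> z \<subseteq> envelope A le z \<phi> a"
  unfolding envelope_def by blast

lemma envelope_mono:
  assumes "poset_on A le" "a \<in> A" "a' \<in> A" "le a a'"
  shows "envelope A le z \<phi> a \<subseteq> envelope A le z \<phi> a'"
  using assms unfolding envelope_def poset_on_def by blast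

lemma envelope_in_lattice:
  assumes "set_lattice U Y" "\<phi> \<in> A \<rightarrow> Y" "a \<in> A" "le a a"
  shows "envelope A le z \<phi> a \<in> Y"
  unfolding envelope_def using assms by (intro set_lattice_Union_closed) auto

lemma leval_envelope_coordinate:
  assumes a: "a \<in> A" "le a a"
    and bnd: "\<And>b. b \<in> A \<Longrightarrow> c \<subseteq> \<phi> b \<and> \<phi> b \<subseteq> d"
    and below: "\<And>b. b \<in> A \<Longrightarrow> le b a \<or> le b z \<Longrightarrow> leval t (y(k := \<phi> b)) \<subseteq> leval t (y(k := \<phi> a))"
  shows "leval t (y(k := envelope A le z \<phi> a)) = leval t (y(k := \<phi> a))"
proof -
  define P where "P = leval t (y(k := c))"
  define Q where "Q = leval t (y(k := d))"
  have median: "leval t (y(k := u)) = P \<union> (u \<inter> Q)" if "c \<subseteq> u" "u \<subseteq> d" for u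
    unfolding P_def Q_def using leval_median[OF that] .
  have env: "\<phi> a \<subseteq> envelope A le z \<phi> a" "envelope A le z \<phi> a \<subseteq> d"
    using envelope_upper[of a A le \<phi> z] a envelope_bounded[of A \<phi> d] bnd by auto
  have "envelope A le z \<phi> a \<inter> Q \<subseteq> leval t (y(k := \<phi> a))"
  proof
    fix u assume "u \<in> envelope A le z \<phi> a \<inter> Q"
    then obtain b where b: "b \<in> A" "le b a \<or> le b z" "u \<in> \<phi> b" "u \<in> Q"
      unfolding envelope_def by blast
    then have "u \<in> leval t (y(k := \<phi> b))" using median bnd[OF b(1)] by auto
    then show "u \<in> leval t (y(k := \<phi> a))" using below[OF b(1,2)] by blast
  qed
  moreover have "c \<subseteq> \<phi> a" "\<phi> a \<subseteq> d" using bnd a(1) by auto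
  ultimately show ?thesis using median env by auto
qed

section \<open>Replacing the inner maps of a pseudo-polynomial function\<close>

lemma leval_replace_all_coordinates:
  assumes tv: "lvars t \<subseteq> {1..n}"
    and rep: "\<And>x. x \<in> prodX n X \<Longrightarrow> f x = leval t (\<lambda>i. \<phi> i (x i))"
    and replace: "\<And>k x y. k \<in> {1..n} \<Longrightarrow> x \<in> prodX n X \<Longrightarrow>
        (\<And>b. b \<in> X k \<Longrightarrow> leval t (y(k := \<phi> k b)) = f (x(k := b))) \<Longrightarrow>
        leval t (y(k := \<psi> k (x k))) = leval t (y(k := \<phi> k (x k)))"
    and x: "x \<in> prodX n X"
  shows "f x = leval t (\<lambda>i\<in>{1..n}. \<psi> i (x i))"
proof -
  define z where "z m x = (\<lambda>i. if i \<le> m then \<psi> i (x i) else \<phi> i (x i))" for m x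
  have stage: "\<forall>x\<in>prodX n X. leval t (z m x) = f x" if "m \<le> n" for m
    using that
  proof (induction m)
    case 0
    have "z 0 x i = \<phi> i (x i)" if "i \<in> lvars t" for x i
      using tv that by (auto simp: z_def)
    then show ?case using rep by (metis (no_types, lifting) leval_cong)
  next
    case (Suc m)
    let ?k = "Suc m"
    have k: "?k \<in> {1..n}" using Suc.prems by auto
    show ?case
    proof
      fix x assume x: "x \<in> prodX n X"
      have shift: "z m (x(?k := b)) = (z m x)(?k := \<phi> ?k b)" for b
        unfolding z_def by (rule ext) auto
      have "leval t ((z m x)(?k := \<phi> ?k b)) = f (x(?k := b))" if "b \<in> X ?k" for b
        using Suc prodX_upd[OF x k that] shift by (metis Suc_leD)
      then have "leval t ((z m x)(?k := \<psi> ?k (x ?k))) = leval t ((z m x)(?k := \<phi> ?k (x ?k)))"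
        using replace[OF k x] by blast
      moreover have "z (Suc m) x = (z m x)(?k := \<psi> ?k (x ?k))" "(z m x)(?k := \<phi> ?k (x ?k)) = z m x"
        unfolding z_def by (auto simp: fun_eq_iff)
      ultimately show "leval t (z (Suc m) x) = f x" using Suc x by (metis Suc_leD)
    qed
  qed
  have "f x = leval t (z n x)" using stage[of n] x by simp
  also have "\<dots> = leval t (\<lambda>i\<in>{1..n}. \<psi> i (x i))"
    by (rule leval_cong) (use tv in \<open>auto simp: z_def\<close>)
  finally show ?thesis .
qed

lemma pseudo_polynomial_term:
  assumes "pseudo_polynomial Y n X zero one f"
  obtains t \<phi> where "lvars t \<subseteq> {1..n}" "lconsts t \<subseteq> Y"
    "\<And>k. k \<in> {1..n} \<Longrightarrow> \<phi> k \<in> X k \<rightarrow> Y \<and> boundary_cond (X k) (zero k) (one k) (\<phi> k)"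
    "\<And>x. x \<in> prodX n X \<Longrightarrow> f x = leval t (\<lambda>i. \<phi> i (x i))"
proof -
  obtain p \<phi> where p: "polynomial_fun Y n p"
    and \<phi>: "\<forall>k\<in>{1..n}. \<phi> k \<in> X k \<rightarrow> Y \<and> boundary_cond (X k) (zero k) (one k) (\<phi> k)"
    and f: "\<forall>x\<in>prodX n X. f x = p (\<lambda>i\<in>{1..n}. \<phi> i (x i))"
    using assms unfolding pseudo_polynomial_def by (elim exE conjE) (rule that)
  obtain t where tv: "lvars t \<subseteq> {1..n}" and tc: "lconsts t \<subseteq> Y"
    and pt: "\<forall>y\<in>Pi\<^sub>E {1..n} (\<lambda>_. Y). p y = leval t y"
    using p unfolding polynomial_fun_def by (elim exE conjE) (rule that)
  have rep: "f x = leval t (\<lambda>i. \<phi> i (x i))" if x: "x \<in> prodX n X" for x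
  proof -
    have "(\<lambda>i\<in>{1..n}. \<phi> i (x i)) \<in> Pi\<^sub>E {1..n} (\<lambda>_. Y)"
      using \<phi> x by (auto simp: PiE_iff Pi_iff)
    then have "f x = leval t (\<lambda>i\<in>{1..n}. \<phi> i (x i))" using f pt x by simp
    also have "\<dots> = leval t (\<lambda>i. \<phi> i (x i))" by (rule leval_cong) (use tv in auto)
    finally show ?thesis .
  qed
  show ?thesis by (rule that[OF tv tc _ rep]) (use \<phi> in blast)
qed

lemma order_preserving_representation:
  assumes Y: "set_lattice U Y"
    and zero: "\<And>k. k \<in> {1..n} \<Longrightarrow> zero k \<in> X k"
    and one: "\<And>k. k \<in> {1..n} \<Longrightarrow> one k \<in> X k"
    and poset: "\<forall>k\<in>{1..n}. poset_on (X k) (le k)"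
    and BC: "cond_BC n X zero one f"
    and mono_k: "\<And>x k a b. x \<in> prodX n X \<Longrightarrow> k \<in> {1..n} \<Longrightarrow> a \<in> X k \<Longrightarrow> b \<in> X k \<Longrightarrow>
        le k a b \<Longrightarrow> f (x(k := a)) \<subseteq> f (x(k := b))"
    and pp: "pseudo_polynomial Y n X zero one f"
  shows "\<exists>p \<psi>. polynomial_fun Y n p \<and>
            (\<forall>k\<in>{1..n}. \<psi> k \<in> X k \<rightarrow> Y \<and> boundary_cond (X k) (zero k) (one k) (\<psi> k) \<and>
               (\<forall>a\<in>X k. \<forall>b\<in>X k. le k a b \<longrightarrow> \<psi> k a \<subseteq> \<psi> k b)) \<and>
            (\<forall>x\<in>prodX n X. f x = p (\<lambda>i\<in>{1..n}. \<psi> i (x i)))"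
proof -
  obtain t \<phi> where tv: "lvars t \<subseteq> {1..n}" and tc: "lconsts t \<subseteq> Y"
    and \<phi>: "\<And>k. k \<in> {1..n} \<Longrightarrow> \<phi> k \<in> X k \<rightarrow> Y \<and> boundary_cond (X k) (zero k) (one k) (\<phi> k)"
    and rep: "\<And>x. x \<in> prodX n X \<Longrightarrow> f x = leval t (\<lambda>i. \<phi> i (x i))"
    by (rule pseudo_polynomial_term[OF pp]) (rule that)
  define \<psi> where "\<psi> k = envelope (X k) (le k) (zero k) (\<phi> k)" for k
  have refl: "le k a a" if "k \<in> {1..n}" "a \<in> X k" for k a
    using poset that unfolding poset_on_def by blast
  have bnd: "\<phi> k (zero k) \<subseteq> \<phi> k a \<and> \<phi> k a \<subseteq> \<phi> k (one k)" if "k \<in> {1..n}" "a \<in> X k" for k a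
    using \<phi>[OF that(1)] that(2) unfolding boundary_cond_def by blast
  have \<psi>_upper: "\<phi> k a \<subseteq> \<psi> k a" if "k \<in> {1..n}" "a \<in> X k" for k a
    unfolding \<psi>_def by (rule envelope_upper) (use that refl[OF that] in auto)
  have \<psi>_top: "\<psi> k a \<subseteq> \<phi> k (one k)" if "k \<in> {1..n}" for k a
    unfolding \<psi>_def by (rule envelope_bounded) (use bnd[OF that] in blast)
  have replace: "leval t (y(k := \<psi> k (x k))) = leval t (y(k := \<phi> k (x k)))"
    if k: "k \<in> {1..n}" and x: "x \<in> prodX n X"
      and y: "\<And>b. b \<in> X k \<Longrightarrow> leval t (y(k := \<phi> k b)) = f (x(k := b))" for k x y
  proof -
    have xk: "x k \<in> X k" using x k by auto
    have below_fx: "f (x(k := b)) \<subseteq> f x" if b: "b \<in> X k" and "le k b (x k) \<or> le k b (zero k)" for b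
      using that(2)
    proof
      assume "le k b (x k)"
      then show ?thesis using mono_k[OF x k b xk] by simp
    next
      assume "le k b (zero k)"
      then have "f (x(k := b)) \<subseteq> f (x(k := zero k))" using mono_k[OF x k b zero[OF k]] by simp
      also have "\<dots> \<subseteq> f x" using BC x k unfolding cond_BC_def by blast
      finally show ?thesis .
    qed
    have below: "leval t (y(k := \<phi> k b)) \<subseteq> leval t (y(k := \<phi> k (x k)))"
      if "b \<in> X k" "le k b (x k) \<or> le k b (zero k)" for b
      using below_fx[OF that] y[OF that(1)] y[OF xk] by simp
    show ?thesis
      unfolding \<psi>_def
      by (rule leval_envelope_coordinate[where A = "X k" and le = "le k" and z = "zero k"
            and c = "\<phi> k (zero k)" and d = "\<phi> k (one k)"])
        (use xk refl[OF k xk] bnd[OF k] below in auto)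
  qed
  show ?thesis
  proof (intro exI conjI ballI impI)
    show "polynomial_fun Y n (leval t)" unfolding polynomial_fun_def using tv tc by blast
  next
    fix k assume k: "k \<in> {1..n}"
    show "\<psi> k \<in> X k \<rightarrow> Y"
    proof
      fix a assume a: "a \<in> X k"
      show "\<psi> k a \<in> Y"
        unfolding \<psi>_def
        by (rule envelope_in_lattice[OF Y]) (use \<phi>[OF k] a refl[OF k a] in auto)
    qed
    have "\<psi> k a \<subseteq> \<psi> k (one k)" for a
      using \<psi>_top[OF k, of a] \<psi>_upper[OF k one[OF k]] by (rule subset_trans)
    moreover have "\<psi> k (zero k) \<subseteq> \<psi> k a" for a
      unfolding \<psi>_def by (rule envelope_bottom)
    ultimately show "boundary_cond (X k) (zero k) (one k) (\<psi> k)"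
      unfolding boundary_cond_def by blast
    show "\<And>a b. a \<in> X k \<Longrightarrow> b \<in> X k \<Longrightarrow> le k a b \<Longrightarrow> \<psi> k a \<subseteq> \<psi> k b"
      unfolding \<psi>_def by (rule envelope_mono) (use poset k in auto)
  next
    fix x assume x: "x \<in> prodX n X"
    from tv rep replace x show "f x = leval t (\<lambda>i\<in>{1..n}. \<psi> i (x i))"
      by (rule leval_replace_all_coordinates)
  qed
qed

theorem mainTheorem10:
  fixes U :: "'u set" and Y :: "'u set set" and n :: nat
    and X :: "nat \<Rightarrow> 'x set" and le :: "nat \<Rightarrow> 'x \<Rightarrow> 'x \<Rightarrow> bool"
    and zero one :: "nat \<Rightarrow> 'x" and f :: "(nat \<Rightarrow> 'x) \<Rightarrow> 'u set"
  assumes Y: "set_lattice U Y"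
    and X01: "\<forall>k\<in>{1..n}. zero k \<in> X k \<and> one k \<in> X k \<and> zero k \<noteq> one k"
    and poset: "\<forall>k\<in>{1..n}. poset_on (X k) (le k)"
    and f_into: "f \<in> prodX n X \<rightarrow> Y"
    and BC: "cond_BC n X zero one f"
    and mono: "\<forall>x\<in>prodX n X. \<forall>y\<in>prodX n X. (\<forall>i\<in>{1..n}. le i (x i) (y i)) \<longrightarrow> f x \<subseteq> f y"
  shows "(\<forall>k\<in>{1..n}. \<forall>a\<in>X k. \<forall>b\<in>X k. le k a b \<longrightarrow>
            PhiMinus U Y n X zero f k a \<subseteq> PhiMinus U Y n X zero f k b \<and>
            PhiPlus U Y n X one f k a \<subseteq> PhiPlus U Y n X one f k b)
     \<and> (pseudo_polynomial Y n X zero one f \<longrightarrow>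
         (\<exists>p \<phi>. polynomial_fun Y n p \<and>
            (\<forall>k\<in>{1..n}. \<phi> k \<in> X k \<rightarrow> Y \<and> boundary_cond (X k) (zero k) (one k) (\<phi> k) \<and>
               (\<forall>a\<in>X k. \<forall>b\<in>X k. le k a b \<longrightarrow> \<phi> k a \<subseteq> \<phi> k b)) \<and>
            (\<forall>x\<in>prodX n X. f x = p (\<lambda>i\<in>{1..n}. \<phi> i (x i)))))"
proof -
  have mono_k: "\<And>x k a b. x \<in> prodX n X \<Longrightarrow> k \<in> {1..n} \<Longrightarrow> a \<in> X k \<Longrightarrow> b \<in> X k \<Longrightarrow>
      le k a b \<Longrightarrow> f (x(k := a)) \<subseteq> f (x(k := b))"
    by (rule coordinate_mono[OF poset mono])
  show ?thesis
  proof (intro conjI impI ballI)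
    fix k a b assume k: "k \<in> {1..n}" and ab: "a \<in> X k" "b \<in> X k" "le k a b"
    have mono_ab: "\<And>x. x \<in> prodX n X \<Longrightarrow> f (x(k := a)) \<subseteq> f (x(k := b))"
      using mono_k k ab by blast
    show "PhiMinus U Y n X zero f k a \<subseteq> PhiMinus U Y n X zero f k b"
      by (rule PhiMinus_mono[where k = k]) (use mono_ab k ab in auto)
    show "PhiPlus U Y n X one f k a \<subseteq> PhiPlus U Y n X one f k b"
      by (rule PhiPlus_mono[where k = k]) (use mono_ab k ab in auto)
  next
    assume pp: "pseudo_polynomial Y n X zero one f"
    show "\<exists>p \<phi>. polynomial_fun Y n p \<and>
        (\<forall>k\<in>{1..n}. \<phi> k \<in> X k \<rightarrow> Y \<and> boundary_cond (X k) (zero k) (one k) (\<phi> k) \<and>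
           (\<forall>a\<in>X k. \<forall>b\<in>X k. le k a b \<longrightarrow> \<phi> k a \<subseteq> \<phi> k b)) \<and>
        (\<forall>x\<in>prodX n X. f x = p (\<lambda>i\<in>{1..n}. \<phi> i (x i)))"
      by (rule order_preserving_representation[OF Y _ _ poset BC mono_k pp]) (use X01 in auto)
  qed
qed

end
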